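(* Each (s)-set is the union of countably many DC graphs.
   Context: A function on an open interval is DC if it is the difference of two convex functions. A function defined on a nonempty set $D\subset\mathbb{R}$ is DCR if it is the restriction of a DC function defined on $\mathbb{R}$. A nonempty closed set $S\subset\mathbb{R}^2$ is an (s)-set if there exists $r>0$ such that (a) $S\subset\bigcup_{i=1}^k\operatorname{graph} f_i$ for some DCR functions $f_i:[0,r]\to\mathbb{R}$ with $f_i(0)=(f_i)'_+(0)=0$, and (b) $S=\bigcup_{h\in H}\operatorname{graph} h$ for some family $H$ of continuous functions on $[0,r]$. A set $P\subset\mathbb{R}^2$ is a DC graph if it is a rotated copy (rotation around the origin) of $\operatorname{graph} f$ for a DCR function $f$ on some nonempty compact (possibly degenerate) interval $I\subset\mathbb{R}$. *)

theory Defs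
  imports "HOL-Analysis.Analysis"
begin

definition DC_on :: "real set \<Rightarrow> (real \<Rightarrow> real) \<Rightarrow> bool" where
  "DC_on I f \<longleftrightarrow> (\<exists>g h. convex_on I g \<and> convex_on I h \<and> (\<forall>x\<in>I. f x = g x - h x))"

definition DCR :: "real set \<Rightarrow> (real \<Rightarrow> real) \<Rightarrow> bool" where
  "DCR D f \<longleftrightarrow> D \<noteq> {} \<and> (\<exists>g. DC_on UNIV g \<and> (\<forall>x\<in>D. f x = g x))"

definition graph_on :: "real set \<Rightarrow> (real \<Rightarrow> real) \<Rightarrow> (real \<times> real) set" where
  "graph_on D f = {(x, f x) | x. x \<in> D}"

definition rot :: "real \<Rightarrow> real \<times> real \<Rightarrow> real \<times> real" where
  "rot t p = (cos t * fst p - sin t * snd p, sin t * fst p + cos t * snd p)"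

definition s_set :: "(real \<times> real) set \<Rightarrow> bool" where
  "s_set S \<longleftrightarrow> S \<noteq> {} \<and> closed S \<and>
    (\<exists>r>0.
      (\<exists>F. finite F \<and>
          (\<forall>f\<in>F. DCR {0..r} f \<and> f 0 = 0 \<and> (f has_real_derivative 0) (at 0 within {0..r})) \<and>
          S \<subseteq> (\<Union>f\<in>F. graph_on {0..r} f)) \<and>
      (\<exists>H. (\<forall>h\<in>H. continuous_on {0..r} h) \<and> S = (\<Union>h\<in>H. graph_on {0..r} h)))"

definition DC_graph :: "(real \<times> real) set \<Rightarrow> bool" where
  "DC_graph P \<longleftrightarrow> (\<exists>t f a b. a \<le> b \<and> DCR {a..b} f \<and> P = rot t ` graph_on {a..b} f)"

end

theory Submission
  imports Defs
begin

text \<open>Every \<open>h \<in> H\<close> is a continuous selection of finitely many DC functions (DC extensions of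
  the \<open>f\<^sub>i\<close>), and such a selection is DC: near each point it follows, on either side, a
  branch through that point, which lets one convex function built from the branches dominate
  all its second differences. For countability, a point \<open>(x0, h x0)\<close> is already fixed by the
  value of \<open>h\<close> at a nearby rational abscissa, so one selection for each rational \<open>q\<close> and each
  of the finitely many possible values at \<open>q\<close> covers \<open>S\<close>.\<close>

definition second_diff :: "(real \<Rightarrow> real) \<Rightarrow> real \<Rightarrow> real \<Rightarrow> real" where
  "second_diff \<phi> x t = \<phi> (x + t) + \<phi> (x - t) - 2 * \<phi> x"

lemma second_diff_add: "second_diff (\<lambda>y. f y + g y) x t = second_diff f x t + second_diff g x t"
  unfolding second_diff_def by simp

lemma second_diff_diff: "second_diff (\<lambda>y. f y - g y) x t = second_diff f x t - second_diff g x t"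
  unfolding second_diff_def by simp

lemma second_diff_nonneg_if_convex:
  assumes "convex_on UNIV \<phi>"
  shows "0 \<le> second_diff \<phi> x t"
proof -
  have "\<phi> ((1 - 1/2) *\<^sub>R (x + t) + (1/2) *\<^sub>R (x - t)) \<le> (1 - 1/2) * \<phi> (x + t) + (1/2) * \<phi> (x - t)"
    by (rule convex_onD[OF assms]) auto
  moreover have "(1 - 1/2) *\<^sub>R (x + t) + (1/2) *\<^sub>R (x - t) = x"
    by (simp add: field_simps)
  ultimately show ?thesis
    unfolding second_diff_def by simp
qed

lemma second_diff_le_sum:
  assumes "finite I" "i \<in> I" "\<forall>j\<in>I. convex_on UNIV (f j)"
  shows "second_diff (f i) x t \<le> second_diff (\<lambda>y. \<Sum>j\<in>I. f j y) x t"
proof -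
  have "second_diff (\<lambda>y. \<Sum>j\<in>I. f j y) x t = (\<Sum>j\<in>I. second_diff (f j) x t)"
    unfolding second_diff_def by (simp add: sum.distrib sum_subtractf sum_distrib_left)
  also have "second_diff (f i) x t \<le> \<dots>"
    using assms second_diff_nonneg_if_convex by (intro member_le_sum) auto
  finally show ?thesis .
qed

lemma convex_on_max:
  assumes "convex_on S f" "convex_on S g"
  shows "convex_on S (\<lambda>x. max (f x) (g x))"
  using assms unfolding convex_on_def
proof (intro conjI ballI allI impI, goal_cases)
  case 1
  then show ?case by simp
next
  case (2 x y u v)
  have "f (u *\<^sub>R x + v *\<^sub>R y) \<le> u * f x + v * f y" "g (u *\<^sub>R x + v *\<^sub>R y) \<le> u * g x + v * g y"
    using 2 by blast+
  moreover have "u * f x + v * f y \<le> u * max (f x) (g x) + v * max (f y) (g y)"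
    "u * g x + v * g y \<le> u * max (f x) (g x) + v * max (f y) (g y)"
    using 2 by (intro add_mono mult_left_mono; simp)+
  ultimately show ?case by simp
qed

lemma convex_on_sum_functions:
  assumes "convex S" "finite I" "\<forall>i\<in>I. convex_on S (f i)"
  shows "convex_on S (\<lambda>x. \<Sum>i\<in>I. f i x)"
  using assms(2,3)
proof (induction I rule: finite_induct)
  case empty
  then show ?case using assms(1) by (simp add: convex_on_const)
next
  case (insert a I)
  then show ?case by (simp add: convex_on_add)
qed

lemma abs_diff_le_second_diff_max:
  assumes "convex_on UNIV U" "convex_on UNIV V" "U x = V x"
  shows "\<bar>U (x + t) - V (x + t)\<bar> \<le> second_diff (\<lambda>y. 2 * max (U y) (V y)) x t"
proof -
  have "\<bar>U (x + t) - V (x + t)\<bar> + second_diff U x t + second_diff V x t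
      \<le> second_diff (\<lambda>y. 2 * max (U y) (V y)) x t"
    using assms(3) unfolding second_diff_def by (simp add: max_def abs_if)
  then show ?thesis
    using second_diff_nonneg_if_convex[OF assms(1), of x t]
      second_diff_nonneg_if_convex[OF assms(2), of x t]
    by linarith
qed

text \<open>Otherwise, at the leftmost maximiser the left neighbour is strictly smaller and the right
  one not larger, contradicting the midpoint inequality.\<close>
lemma local_midpoint_convex_max_principle:
  assumes "a \<le> b" "continuous_on {a..b} \<phi>"
    and loc: "\<forall>x\<in>{a<..<b}. \<forall>\<^sub>F t in at_right 0. 0 \<le> second_diff \<phi> x t"
    and "z \<in> {a..b}"
  shows "\<phi> z \<le> max (\<phi> a) (\<phi> b)"
proof (rule ccontr)
  assume z: "\<not> ?thesis"
  obtain xm where xm: "xm \<in> {a..b}" "\<forall>y\<in>{a..b}. \<phi> y \<le> \<phi> xm"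
    using continuous_attains_sup[OF compact_Icc _ assms(2)] assms(1) by auto
  define M where "M = {y \<in> {a..b}. \<phi> y = \<phi> xm}"
  have "closed M"
    unfolding M_def by (rule continuous_closed_preimage_constant[OF assms(2) closed_atLeastAtMost])
  then have "compact M"
    unfolding compact_eq_bounded_closed M_def
    by (auto intro: bounded_subset[OF bounded_closed_interval])
  then obtain x0 where x0: "x0 \<in> M" "\<forall>y\<in>M. x0 \<le> y"
    using compact_attains_inf[of M] xm unfolding M_def by blast
  have "\<phi> a < \<phi> x0" "\<phi> b < \<phi> x0"
    using z xm x0(1) assms(1,4) unfolding M_def by force+
  then have x0_in: "x0 \<in> {a<..<b}"
    using x0(1) unfolding M_def by (auto simp: less_le)
  obtain d where "d > 0" and d: "\<forall>t>0. t < d \<longrightarrow> 0 \<le> second_diff \<phi> x0 t"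
    using loc[rule_format, OF x0_in] unfolding eventually_at_right_field by auto
  define m where "m = min d (min (x0 - a) (b - x0))"
  have "0 < m" "m \<le> d" "m \<le> x0 - a" "m \<le> b - x0"
    unfolding m_def using \<open>d > 0\<close> x0_in by auto
  define t where "t = m / 2"
  have t: "0 < t" "t < d" "a \<le> x0 - t" "x0 + t \<le> b"
    unfolding t_def using \<open>0 < m\<close> \<open>m \<le> d\<close> \<open>m \<le> x0 - a\<close> \<open>m \<le> b - x0\<close> by auto
  have "\<phi> (x0 + t) \<le> \<phi> x0" "\<phi> (x0 - t) \<le> \<phi> x0"
    using xm(2) x0(1) t unfolding M_def by auto
  moreover have "\<phi> (x0 - t) \<noteq> \<phi> x0"
    using x0 t unfolding M_def by force
  ultimately have "second_diff \<phi> x0 t < 0"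
    unfolding second_diff_def by linarith
  with d t show False by force
qed

lemma convex_on_UNIV_if_local_midpoint_convex:
  fixes \<psi> :: "real \<Rightarrow> real"
  assumes "continuous_on UNIV \<psi>"
    and loc: "\<forall>x. \<forall>\<^sub>F t in at_right 0. 0 \<le> second_diff \<psi> x t"
  shows "convex_on UNIV \<psi>"
proof (rule convex_on_linorderI)
  fix u a b :: real
  assume u: "0 < u" "u < 1" and "a < b"
  define k where "k = (\<psi> b - \<psi> a) / (b - a)"
  define L where "L y = \<psi> a + (y - a) * k" for y
  define z where "z = (1 - u) *\<^sub>R a + u *\<^sub>R b"
  have "second_diff L x t = 0" for x t
    unfolding L_def second_diff_def by (simp add: algebra_simps)
  then have "\<forall>x\<in>{a<..<b}. \<forall>\<^sub>F t in at_right 0. 0 \<le> second_diff (\<lambda>y. \<psi> y - L y) x t"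
    using loc by (simp add: second_diff_diff)
  moreover have "continuous_on {a..b} (\<lambda>y. \<psi> y - L y)"
    unfolding L_def by (intro continuous_intros continuous_on_subset[OF assms(1)]) auto
  moreover have "z \<in> {a..b}"
  proof -
    have "u * (b - a) \<le> b - a"
      using u \<open>a < b\<close> by (intro mult_left_le_one_le) auto
    moreover have "0 \<le> u * (b - a)"
      using u \<open>a < b\<close> by simp
    moreover have "z = a + u * (b - a)"
      by (simp add: z_def algebra_simps)
    ultimately show ?thesis
      unfolding atLeastAtMost_iff by linarith
  qed
  ultimately have "\<psi> z - L z \<le> max (\<psi> a - L a) (\<psi> b - L b)"
    using \<open>a < b\<close> by (intro local_midpoint_convex_max_principle) auto
  moreover have "L a = \<psi> a" "L b = \<psi> b" "L z = (1 - u) * \<psi> a + u * \<psi> b"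
    unfolding L_def k_def z_def using \<open>a < b\<close> by (simp_all add: field_simps)
  ultimately show "\<psi> ((1 - u) *\<^sub>R a + u *\<^sub>R b) \<le> (1 - u) * \<psi> a + u * \<psi> b"
    unfolding z_def by simp
qed simp

lemma DC_on_UNIV_continuous:
  assumes "DC_on UNIV g"
  shows "continuous_on UNIV g"
proof -
  obtain A B where "convex_on UNIV A" "convex_on UNIV B" "g = (\<lambda>x. A x - B x)"
    using assms unfolding DC_on_def by auto
  then show ?thesis
    by (simp add: continuous_on_diff convex_on_continuous)
qed

lemma DC_on_UNIV_iff: "DC_on UNIV g \<longleftrightarrow> (\<exists>A. convex_on UNIV A \<and> convex_on UNIV (\<lambda>x. A x - g x))"
proof
  assume "DC_on UNIV g"
  then obtain A B where "convex_on UNIV A" "convex_on UNIV B" and g: "\<forall>x. g x = A x - B x"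
    unfolding DC_on_def by blast
  moreover have "(\<lambda>x. A x - g x) = B"
    using g by simp
  ultimately show "\<exists>A. convex_on UNIV A \<and> convex_on UNIV (\<lambda>x. A x - g x)"
    by auto
next
  assume "\<exists>A. convex_on UNIV A \<and> convex_on UNIV (\<lambda>x. A x - g x)"
  then obtain A where "convex_on UNIV A" "convex_on UNIV (\<lambda>x. A x - g x)"
    by blast
  moreover have "\<forall>x\<in>UNIV. g x = A x - (A x - g x)"
    by simp
  ultimately show "DC_on UNIV g"
    unfolding DC_on_def by blast
qed

text \<open>\<open>C + h\<close> and \<open>C - h\<close> are locally midpoint convex, hence convex, and
  \<open>h = (C + h)/2 - (C - h)/2\<close>.\<close>
lemma DC_on_UNIV_if_second_diff_dominated:
  assumes "continuous_on UNIV h" "convex_on UNIV C"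
    and dom: "\<forall>x. \<forall>\<^sub>F t in at_right 0. \<bar>second_diff h x t\<bar> \<le> second_diff C x t"
  shows "DC_on UNIV h"
proof -
  have "continuous_on UNIV C"
    using assms(2) by (simp add: convex_on_continuous)
  have "\<forall>\<^sub>F t in at_right 0. 0 \<le> second_diff (\<lambda>y. C y + h y) x t" for x
    using dom[rule_format, of x] by (rule eventually_mono) (simp add: second_diff_add abs_le_iff)
  moreover have "\<forall>\<^sub>F t in at_right 0. 0 \<le> second_diff (\<lambda>y. C y - h y) x t" for x
    using dom[rule_format, of x] by (rule eventually_mono) (simp add: second_diff_diff abs_le_iff)
  ultimately have "convex_on UNIV (\<lambda>y. C y + h y)" "convex_on UNIV (\<lambda>y. C y - h y)"
    using \<open>continuous_on UNIV C\<close> assms(1)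
    by (auto intro!: convex_on_UNIV_if_local_midpoint_convex continuous_intros)
  then have "convex_on UNIV (\<lambda>y. (C y + h y) / 2)" "convex_on UNIV (\<lambda>y. (C y - h y) / 2)"
    by auto
  moreover have "\<forall>y\<in>UNIV. h y = (C y + h y) / 2 - (C y - h y) / 2"
    by (simp add: field_simps)
  ultimately show ?thesis
    unfolding DC_on_def by blast
qed

lemma eventually_selection_on_branch_through:
  fixes G :: "('a::t2_space \<Rightarrow> 'b::t2_space) set"
  assumes "finite G" "\<forall>g\<in>G. isCont g x" "isCont h x" "\<forall>y. \<exists>g\<in>G. h y = g y"
  shows "\<forall>\<^sub>F y in nhds x. \<exists>g\<in>G. g x = h x \<and> h y = g y"
proof -
  have "\<forall>\<^sub>F y in nhds x. \<forall>g\<in>G. g x \<noteq> h x \<longrightarrow> g y \<noteq> h y"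
  proof (rule eventually_ball_finite[OF assms(1)], rule ballI)
    fix g assume "g \<in> G"
    show "\<forall>\<^sub>F y in nhds x. g x \<noteq> h x \<longrightarrow> g y \<noteq> h y"
    proof (cases "g x = h x")
      case False
      have "((\<lambda>y. (g y, h y)) \<longlongrightarrow> (g x, h x)) (nhds x)"
        using assms(2,3) \<open>g \<in> G\<close>
        by (auto simp: isCont_def tendsto_at_iff_tendsto_nhds intro: tendsto_Pair)
      then have "\<forall>\<^sub>F y in nhds x. (g y, h y) \<in> {(u, v) |u v. u \<noteq> v}"
        using False by (intro topological_tendstoD open_diagonal_complement) auto
      then show ?thesis by (rule eventually_mono) auto
    qed simp
  qed
  then show ?thesis
    by (rule eventually_mono) (use assms(4) in metis)
qed

text \<open>Write each branch as \<open>g = A g - B g\<close>. Near \<open>x\<close> the function \<open>h\<close> follows, on either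
  side, branches \<open>p\<close> and \<open>q\<close> through \<open>(x, h x)\<close>; the jump \<open>q - p\<close> equals \<open>U - V\<close> for the
  convex \<open>U = A q + B p\<close>, \<open>V = A p + B q\<close>, so the second differences of \<open>h\<close> are dominated
  by those of a convex function summed over all pairs of branches.\<close>
lemma DC_on_UNIV_continuous_selection:
  fixes G :: "(real \<Rightarrow> real) set"
  assumes fin: "finite G" and dc: "\<forall>g\<in>G. DC_on UNIV g"
    and "continuous_on UNIV h" and sel: "\<forall>x. \<exists>g\<in>G. h x = g x"
  shows "DC_on UNIV h"
proof -
  have "\<forall>g\<in>G. \<exists>A. convex_on UNIV A \<and> convex_on UNIV (\<lambda>x. A x - g x)"
    using dc by (simp add: DC_on_UNIV_iff)
  then obtain A where AB: "\<forall>g\<in>G. convex_on UNIV (A g) \<and> convex_on UNIV (\<lambda>x. A g x - g x)"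
    by (rule bchoice[THEN exE])
  define B where "B g x = A g x - g x" for g x
  have A: "\<forall>g\<in>G. convex_on UNIV (A g)" and B: "\<forall>g\<in>G. convex_on UNIV (B g)"
    using AB unfolding B_def by simp_all
  define U where "U p q y = A q y + B p y" for p q y
  define V where "V p q y = A p y + B q y" for p q y
  define T where
    "T pq y = A (fst pq) y + B (fst pq) y + 2 * max (U (fst pq) (snd pq) y) (V (fst pq) (snd pq) y)"
    for pq y
  define C where "C y = (\<Sum>pq\<in>G \<times> G. T pq y)" for y
  have UV: "p \<in> G \<Longrightarrow> q \<in> G \<Longrightarrow> convex_on UNIV (U p q) \<and> convex_on UNIV (V p q)" for p q
    using A B unfolding U_def V_def by auto
  have T: "\<forall>pq\<in>G \<times> G. convex_on UNIV (T pq)"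
    using A B UV unfolding T_def by (auto intro!: convex_on_add convex_on_cmul convex_on_max)
  have "convex_on UNIV C"
    unfolding C_def using fin T by (intro convex_on_sum_functions) auto
  moreover have "\<forall>\<^sub>F t in at_right 0. \<bar>second_diff h x t\<bar> \<le> second_diff C x t" for x
  proof -
    have "\<forall>\<^sub>F y in nhds x. \<exists>g\<in>G. g x = h x \<and> h y = g y"
      using assms DC_on_UNIV_continuous
      by (intro eventually_selection_on_branch_through) (auto simp: continuous_on_eq_continuous_at)
    then obtain d where "d > 0" and d: "\<forall>y. dist y x < d \<longrightarrow> (\<exists>g\<in>G. g x = h x \<and> h y = g y)"
      unfolding eventually_nhds_metric by auto
    have "\<bar>second_diff h x t\<bar> \<le> second_diff C x t" if t: "0 < t" "t < d" for t
    proof -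
      obtain q where q: "q \<in> G" "q x = h x" "h (x + t) = q (x + t)"
        using d[rule_format, of "x + t"] t by (auto simp: dist_real_def)
      obtain p where p: "p \<in> G" "p x = h x" "h (x - t) = p (x - t)"
        using d[rule_format, of "x - t"] t by (auto simp: dist_real_def)
      have p_AB: "p y = A p y - B p y" and q_AB: "q y = A q y - B q y" for y
        by (simp_all add: B_def)
      let ?M = "\<lambda>y. 2 * max (U p q y) (V p q y)"
      have jump: "second_diff h x t = (q (x + t) - p (x + t)) + second_diff p x t"
        unfolding second_diff_def using p q by simp
      have "U p q x = V p q x"
        unfolding U_def V_def using p_AB[of x] q_AB[of x] p(2) q(2) by linarith
      then have "\<bar>U p q (x + t) - V p q (x + t)\<bar> \<le> second_diff ?M x t"
        using UV[OF p(1) q(1)] by (intro abs_diff_le_second_diff_max) auto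
      then have jump_le: "\<bar>q (x + t) - p (x + t)\<bar> \<le> second_diff ?M x t"
        unfolding U_def V_def using p_AB[of "x + t"] q_AB[of "x + t"] by simp
      have "second_diff p x t = second_diff (A p) x t - second_diff (B p) x t"
        unfolding second_diff_def using p_AB by simp
      moreover have "0 \<le> second_diff (A p) x t" "0 \<le> second_diff (B p) x t"
        using A B p(1) second_diff_nonneg_if_convex by auto
      ultimately have p_le: "\<bar>second_diff p x t\<bar> \<le> second_diff (A p) x t + second_diff (B p) x t"
        by linarith
      have "\<bar>second_diff h x t\<bar> \<le> \<bar>q (x + t) - p (x + t)\<bar> + \<bar>second_diff p x t\<bar>"
        unfolding jump by (rule abs_triangle_ineq)
      also have "\<dots> \<le> second_diff (A p) x t + second_diff (B p) x t + second_diff ?M x t"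
        using jump_le p_le by linarith
      also have "\<dots> = second_diff (T (p, q)) x t"
        unfolding T_def by (simp add: second_diff_add)
      also have "\<dots> \<le> second_diff C x t"
        unfolding C_def using fin p(1) q(1) T by (intro second_diff_le_sum) auto
      finally show ?thesis .
    qed
    then show ?thesis
      unfolding eventually_at_right_field using \<open>d > 0\<close> by auto
  qed
  ultimately show ?thesis
    using assms(3) by (intro DC_on_UNIV_if_second_diff_dominated) auto
qed

lemma DC_on_UNIV_const: "DC_on UNIV (\<lambda>_. c)"
  unfolding DC_on_def by (intro exI[of _ "\<lambda>_. c"] exI[of _ "\<lambda>_. 0"]) (simp add: convex_on_const)

text \<open>Clamping the argument to \<open>[a, b]\<close> extends \<open>h\<close> to the line as a selection of the branches
  together with the constants \<open>h a\<close> and \<open>h b\<close>.\<close>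
lemma DCR_continuous_selection:
  fixes G :: "(real \<Rightarrow> real) set"
  assumes "a \<le> b" "finite G" "\<forall>g\<in>G. DC_on UNIV g"
    and "continuous_on {a..b} h" and sel: "\<forall>x\<in>{a..b}. \<exists>g\<in>G. h x = g x"
  shows "DCR {a..b} h"
proof -
  define c where "c y = max a (min b y)" for y :: real
  have c_in: "c y \<in> {a..b}" for y
    using assms(1) by (auto simp: c_def)
  have "continuous_on UNIV (h \<circ> c)"
    unfolding c_def
    by (intro continuous_on_compose continuous_intros continuous_on_subset[OF assms(4)])
      (use c_in in \<open>auto simp: c_def\<close>)
  moreover have "\<forall>y. \<exists>g\<in>insert (\<lambda>_. h a) (insert (\<lambda>_. h b) G). (h \<circ> c) y = g y"
  proof
    fix y
    consider "y < a" | "b < y" | "y \<in> {a..b}" by force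
    then show "\<exists>g\<in>insert (\<lambda>_. h a) (insert (\<lambda>_. h b) G). (h \<circ> c) y = g y"
      by cases (use sel assms(1) in \<open>auto simp: c_def\<close>)
  qed
  ultimately have "DC_on UNIV (h \<circ> c)"
    using assms(2,3)
    by (intro DC_on_UNIV_continuous_selection[of "insert (\<lambda>_. h a) (insert (\<lambda>_. h b) G)"])
      (auto simp: DC_on_UNIV_const)
  moreover have "\<forall>x\<in>{a..b}. h x = (h \<circ> c) x"
    by (simp add: c_def)
  ultimately show ?thesis
    unfolding DCR_def using assms(1) by auto
qed

lemma DC_graph_graph_on:
  assumes "a \<le> b" "DCR {a..b} f"
  shows "DC_graph (graph_on {a..b} f)"
proof -
  have "rot 0 = id"
    by (auto simp: rot_def fun_eq_iff)
  then show ?thesis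
    unfolding DC_graph_def using assms
    by (intro exI[of _ 0] exI[of _ f] exI[of _ a] exI[of _ b]) simp
qed

lemma finite_branches_gap:
  fixes G :: "('a::t2_space \<Rightarrow> real) set"
  assumes "finite G" "\<forall>g\<in>G. isCont g x0"
  obtains \<epsilon> where "\<epsilon> > 0" "\<forall>g\<in>G. \<bar>g x0 - y0\<bar> < \<epsilon> \<longrightarrow> g x0 = y0"
    "\<forall>\<^sub>F x in nhds x0. \<forall>g\<in>G. \<bar>g x - y0\<bar> < \<epsilon> \<or> 2 * \<epsilon> < \<bar>g x - y0\<bar>"
proof -
  obtain d where "d > 0" and d: "\<forall>y\<in>(\<lambda>g. g x0) ` G. y \<noteq> y0 \<longrightarrow> d \<le> dist y0 y"
    using finite_set_avoid[of "(\<lambda>g. g x0) ` G" y0] assms(1) by auto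
  have far: "g \<in> G \<Longrightarrow> g x0 \<noteq> y0 \<Longrightarrow> d \<le> \<bar>g x0 - y0\<bar>" for g
    using d by (auto simp: dist_real_def)
  have "\<forall>\<^sub>F x in nhds x0. \<forall>g\<in>G. dist (g x) (g x0) < d / 3"
    using assms \<open>d > 0\<close>
    by (intro eventually_ball_finite ballI tendstoD)
      (auto simp: isCont_def tendsto_at_iff_tendsto_nhds)
  then have "\<forall>\<^sub>F x in nhds x0. \<forall>g\<in>G. \<bar>g x - y0\<bar> < d / 3 \<or> 2 * (d / 3) < \<bar>g x - y0\<bar>"
  proof (rule eventually_mono, intro ballI)
    fix x g
    assume close: "\<forall>g\<in>G. dist (g x) (g x0) < d / 3" and "g \<in> G"
    then have close_x: "\<bar>g x - g x0\<bar> < d / 3"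
      by (simp add: dist_real_def)
    show "\<bar>g x - y0\<bar> < d / 3 \<or> 2 * (d / 3) < \<bar>g x - y0\<bar>"
    proof (cases "g x0 = y0")
      case True
      then show ?thesis
        using close_x by simp
    next
      case False
      have "\<bar>g x0 - y0\<bar> \<le> \<bar>g x - g x0\<bar> + \<bar>g x - y0\<bar>"
        using abs_triangle_ineq[of "g x0 - g x" "g x - y0"] by (simp add: abs_minus_commute)
      then show ?thesis
        using far[OF \<open>g \<in> G\<close> False] close_x by linarith
    qed
  qed
  moreover have "\<forall>g\<in>G. \<bar>g x0 - y0\<bar> < d / 3 \<longrightarrow> g x0 = y0"
    using far \<open>d > 0\<close> by force
  ultimately show ?thesis
    using \<open>d > 0\<close> by (intro that[of "d / 3"]) auto
qed

lemma connected_image_in_ball_if_avoids_sphere: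
  fixes f :: "'a::topological_space \<Rightarrow> 'b::metric_space"
  assumes "connected S" "continuous_on S f" "\<forall>x\<in>S. dist (f x) y \<noteq> e"
    and "q \<in> S" "dist (f q) y < e" "x \<in> S"
  shows "dist (f x) y < e"
proof -
  have cover: "f ` S \<subseteq> ball y e \<union> - cball y e"
    using assms(3) by (auto simp: dist_commute)
  then have "ball y e \<inter> f ` S = {} \<or> - cball y e \<inter> f ` S = {}"
    by (intro connectedD[OF connected_continuous_image[OF assms(2,1)]]) auto
  moreover have "f q \<in> ball y e \<inter> f ` S"
    using assms(4,5) by (simp add: dist_commute)
  ultimately have "f ` S \<subseteq> ball y e"
    using cover by blast
  then show ?thesis
    using assms(6) by (auto simp: dist_commute)
qed

text \<open>Near \<open>x0\<close> the branches stay either \<open>\<epsilon>\<close>-close to \<open>y0 = h x0\<close> or \<open>2\<epsilon>\<close>-far from it,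
  so by connectedness every selection agreeing with \<open>h\<close> at \<open>q\<close> stays \<open>\<epsilon>\<close>-close to \<open>y0\<close>
  between \<open>q\<close> and \<open>x0\<close>, and at \<open>x0\<close> this forces the value \<open>y0\<close>.\<close>
lemma rational_point_determines_selection:
  fixes G H :: "(real \<Rightarrow> real) set"
  assumes "a < b" "finite G" "\<forall>g\<in>G. continuous_on UNIV g"
    and H_cont: "\<forall>h\<in>H. continuous_on {a..b} h" and sel: "\<forall>h\<in>H. \<forall>x\<in>{a..b}. \<exists>g\<in>G. h x = g x"
    and "h \<in> H" "x0 \<in> {a..b}"
  shows "\<exists>q\<in>\<rat> \<inter> {a..b}. \<forall>h'\<in>H. h' q = h q \<longrightarrow> h' x0 = h x0"
proof -
  obtain \<epsilon> where "\<epsilon> > 0" and at_x0: "\<forall>g\<in>G. \<bar>g x0 - h x0\<bar> < \<epsilon> \<longrightarrow> g x0 = h x0"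
    and gap: "\<forall>\<^sub>F x in nhds x0. \<forall>g\<in>G. \<bar>g x - h x0\<bar> < \<epsilon> \<or> 2 * \<epsilon> < \<bar>g x - h x0\<bar>"
    using finite_branches_gap[of G x0 "h x0"] assms(2,3)
    by (auto simp: continuous_on_eq_continuous_at)
  obtain d1 where "d1 > 0"
    and d1: "\<forall>x. dist x x0 < d1 \<longrightarrow> (\<forall>g\<in>G. \<bar>g x - h x0\<bar> < \<epsilon> \<or> 2 * \<epsilon> < \<bar>g x - h x0\<bar>)"
    using gap unfolding eventually_nhds_metric by blast
  obtain d2 where "d2 > 0" and d2: "\<forall>x\<in>{a..b}. dist x x0 < d2 \<longrightarrow> dist (h x) (h x0) < \<epsilon>"
    using H_cont \<open>h \<in> H\<close> \<open>x0 \<in> {a..b}\<close> \<open>\<epsilon> > 0\<close> unfolding continuous_on_iff by blast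
  have "x0 \<in> closure ({a..b} \<inter> \<rat>)"
    using \<open>a < b\<close> \<open>x0 \<in> {a..b}\<close> by (simp add: closure_convex_Int_superset Rats_closure_real)
  moreover have "min d1 d2 > 0"
    using \<open>d1 > 0\<close> \<open>d2 > 0\<close> by simp
  ultimately obtain q where q: "q \<in> {a..b} \<inter> \<rat>" "dist q x0 < min d1 d2"
    unfolding closure_approachable by blast
  have "h' x0 = h x0" if "h' \<in> H" "h' q = h q" for h'
  proof -
    have J_sub: "closed_segment q x0 \<subseteq> {a..b}"
      using q(1) \<open>x0 \<in> {a..b}\<close> by (intro closed_segment_subset) auto
    have avoid: "\<forall>x\<in>closed_segment q x0. dist (h' x) (h x0) \<noteq> \<epsilon>"
    proof
      fix x
      assume x_in: "x \<in> closed_segment q x0"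
      obtain g where "g \<in> G" "h' x = g x"
        using sel[rule_format, OF \<open>h' \<in> H\<close> subsetD[OF J_sub x_in]] by blast
      moreover have "dist x x0 < d1"
        using dist_in_closed_segment[OF x_in] q(2) by linarith
      ultimately have "\<bar>h' x - h x0\<bar> < \<epsilon> \<or> 2 * \<epsilon> < \<bar>h' x - h x0\<bar>"
        using d1 by simp
      then show "dist (h' x) (h x0) \<noteq> \<epsilon>"
        using \<open>\<epsilon> > 0\<close> by (auto simp: dist_real_def)
    qed
    have "continuous_on (closed_segment q x0) h'"
      using H_cont \<open>h' \<in> H\<close> J_sub by (meson continuous_on_subset)
    moreover have "dist (h' q) (h x0) < \<epsilon>"
      using d2 q \<open>h' q = h q\<close> by simp
    ultimately have "dist (h' x0) (h x0) < \<epsilon>"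
      using connected_image_in_ball_if_avoids_sphere[OF connected_segment _ avoid
          ends_in_segment(1) _ ends_in_segment(2)]
      by blast
    moreover obtain g where "g \<in> G" "h' x0 = g x0"
      using sel[rule_format, OF \<open>h' \<in> H\<close> \<open>x0 \<in> {a..b}\<close>] by blast
    ultimately show ?thesis
      using at_x0 by (simp add: dist_real_def)
  qed
  then show ?thesis
    using q(1) by blast
qed

lemma countable_subfamily_same_graphs:
  fixes G H :: "(real \<Rightarrow> real) set"
  assumes "a < b" "finite G" "\<forall>g\<in>G. continuous_on UNIV g"
    and "\<forall>h\<in>H. continuous_on {a..b} h" and sel: "\<forall>h\<in>H. \<forall>x\<in>{a..b}. \<exists>g\<in>G. h x = g x"
  obtains H' where "H' \<subseteq> H" "countable H'"
    "(\<Union>h\<in>H'. graph_on {a..b} h) = (\<Union>h\<in>H. graph_on {a..b} h)"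
proof -
  define I where "I = (SIGMA q:\<rat> \<inter> {a..b}. (\<lambda>h. h q) ` H)"
  have "\<forall>i\<in>I. \<exists>h. h \<in> H \<and> h (fst i) = snd i"
    unfolding I_def by auto
  then obtain c where c_in: "\<forall>i\<in>I. c i \<in> H" and c_at: "\<forall>i\<in>I. c i (fst i) = snd i"
    by (metis bchoice)
  have "countable I"
    unfolding I_def
  proof (rule countable_SIGMA)
    show "countable (\<rat> \<inter> {a..b})"
      using countable_rat by (rule countable_Int1)
  next
    fix q
    assume "q \<in> \<rat> \<inter> {a..b}"
    then have "(\<lambda>h. h q) ` H \<subseteq> (\<lambda>g. g q) ` G"
      using sel by blast
    then show "countable ((\<lambda>h. h q) ` H)"
      using assms(2) by (meson countable_finite finite_imageI finite_subset)
  qed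
  have "c ` I \<subseteq> H"
    using c_in by auto
  have "graph_on {a..b} h \<subseteq> (\<Union>h'\<in>c ` I. graph_on {a..b} h')" if h_in: "h \<in> H" for h
  proof
    fix p
    assume "p \<in> graph_on {a..b} h"
    then obtain x where x_in: "x \<in> {a..b}" and p: "p = (x, h x)"
      unfolding graph_on_def by blast
    obtain q where q: "q \<in> \<rat> \<inter> {a..b}" "\<forall>h'\<in>H. h' q = h q \<longrightarrow> h' x = h x"
      using rational_point_determines_selection[OF assms h_in x_in] by blast
    have qI: "(q, h q) \<in> I"
      unfolding I_def using q(1) h_in by blast
    then have "c (q, h q) x = h x"
      using q(2) c_in[rule_format, OF qI] c_at[rule_format, OF qI] by simp
    then have "p \<in> graph_on {a..b} (c (q, h q))"
      using x_in p unfolding graph_on_def by auto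
    then show "p \<in> (\<Union>h'\<in>c ` I. graph_on {a..b} h')"
      using qI by blast
  qed
  then have "(\<Union>h\<in>H. graph_on {a..b} h) \<subseteq> (\<Union>h\<in>c ` I. graph_on {a..b} h)"
    by (rule UN_least)
  moreover have "(\<Union>h\<in>c ` I. graph_on {a..b} h) \<subseteq> (\<Union>h\<in>H. graph_on {a..b} h)"
    using \<open>c ` I \<subseteq> H\<close> by (rule UN_mono) simp
  ultimately show ?thesis
    using \<open>c ` I \<subseteq> H\<close> \<open>countable I\<close> by (intro that[of "c ` I"]) auto
qed

lemma s_set_continuous_selections:
  assumes "s_set S"
  obtains r G H where "r > 0" "finite G" "\<forall>g\<in>G. DC_on UNIV g"
    "\<forall>h\<in>H. continuous_on {0..r} h" "\<forall>h\<in>H. \<forall>x\<in>{0..r}. \<exists>g\<in>G. h x = g x"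
    "S = (\<Union>h\<in>H. graph_on {0..r} h)"
proof -
  obtain r F H where "r > 0" "finite F" and F: "\<forall>f\<in>F. DCR {0..r} f"
    and S_sub: "S \<subseteq> (\<Union>f\<in>F. graph_on {0..r} f)"
    and H: "\<forall>h\<in>H. continuous_on {0..r} h" and S_eq: "S = (\<Union>h\<in>H. graph_on {0..r} h)"
    using assms unfolding s_set_def by blast
  have "\<forall>f\<in>F. \<exists>g. DC_on UNIV g \<and> (\<forall>x\<in>{0..r}. f x = g x)"
    using F unfolding DCR_def by blast
  then obtain E where E: "\<forall>f\<in>F. DC_on UNIV (E f) \<and> (\<forall>x\<in>{0..r}. f x = E f x)"
    by (rule bchoice[THEN exE])
  have "\<forall>h\<in>H. \<forall>x\<in>{0..r}. \<exists>g\<in>E ` F. h x = g x"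
  proof (intro ballI)
    fix h x
    assume "h \<in> H" "x \<in> {0..r}"
    then have "(x, h x) \<in> S"
      unfolding S_eq graph_on_def by blast
    then obtain f where "f \<in> F" "h x = f x"
      using S_sub unfolding graph_on_def by blast
    then show "\<exists>g\<in>E ` F. h x = g x"
      using E \<open>x \<in> {0..r}\<close> by auto
  qed
  then show ?thesis
    using that[of r "E ` F" H] \<open>r > 0\<close> \<open>finite F\<close> E H S_eq by blast
qed

theorem corollary5p4:
  fixes S :: "(real \<times> real) set"
  assumes "s_set S"
  shows "\<exists>\<P>. countable \<P> \<and> (\<forall>P\<in>\<P>. DC_graph P) \<and> S = \<Union>\<P>"
proof -
  obtain r G H where "r > 0" "finite G" and G: "\<forall>g\<in>G. DC_on UNIV g"
    and H: "\<forall>h\<in>H. continuous_on {0..r} h" and sel: "\<forall>h\<in>H. \<forall>x\<in>{0..r}. \<exists>g\<in>G. h x = g x"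
    and S_eq: "S = (\<Union>h\<in>H. graph_on {0..r} h)"
    using assms by (rule s_set_continuous_selections)
  have "\<forall>g\<in>G. continuous_on UNIV g"
    using G DC_on_UNIV_continuous by blast
  then obtain H' where "H' \<subseteq> H" "countable H'"
    and H': "(\<Union>h\<in>H'. graph_on {0..r} h) = (\<Union>h\<in>H. graph_on {0..r} h)"
    by (rule countable_subfamily_same_graphs[OF \<open>r > 0\<close> \<open>finite G\<close> _ H sel])
  have "DC_graph (graph_on {0..r} h)" if "h \<in> H" for h
    using DCR_continuous_selection[of 0 r G h] \<open>r > 0\<close> \<open>finite G\<close> G H sel that
    by (intro DC_graph_graph_on) auto
  then show ?thesis
    using \<open>H' \<subseteq> H\<close> \<open>countable H'\<close> H' S_eq by (intro exI[of _ "graph_on {0..r} ` H'"]) auto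
qed

end
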